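(* Let $K$ be a non-archimedean local field with normalized valuation $v$ and absolute value $|x|=q^{-v(x)}$, $q$ the cardinality of the residue field. Let $V$ be an $n$-dimensional $K$-vector space with basis $v_1,\dots,v_n$, $\underline n=\{1,\dots,n\}$, and let $N$ be the normalizer in $PGL(V)$ of the image $T$ of the diagonal matrices. Let $\overline{A}$, with its topology and $N$-action, and $\mathcal{S}_c$ and $\varphi$ be as in the context. Then the map $\varphi:\overline{A}\to\mathcal{S}_c$ is an $N$-equivariant homeomorphism.
   Context: A seminorm on $V$ is a map $\gamma:V\to\mathbb{R}_{\ge0}$, not identically zero, with $\gamma(\lambda x)=|\lambda|\gamma(x)$ and $\gamma(x+y)\le\max\{\gamma(x),\gamma(y)\}$. It is canonical with respect to a basis $w_1,\dots,w_n$ if $\gamma(\sum\lambda_iw_i)=\max_i|\lambda_i|\gamma(w_i)$. Two seminorms are equivalent if they differ by a positive real constant factor. $\mathcal{S}'_c$ is the set of seminorms canonical with respect to $v_1,\dots,v_n$, with the topology of pointwise convergence (coarsest topology making $\gamma\mapsto\gamma(x)$ continuous for each $x\in V$), and $\mathcal{S}_c$ is its quotient by equivalence, with the quotient topology. $N$ acts on $\mathcal{S}_c$ by $\gamma\mapsto\gamma\circ n^{-1}$. For each nonempty $I\subseteq\underline{n}$ let $A_I$ be the real vector space generated by $\overline{\eta}^I_i$ ($i\in I$) subject to $\sum_{i\in I}\overline{\eta}^I_i=0$; $A=A_{\underline n}$, $\eta_i=\overline\eta_i^{\underline n}$; $s_I:A\to A_I$ linear with $\eta_i\mapsto\overline{\eta}^I_i$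 for $i\in I$ and $\eta_i\mapsto0$ for $i\notin I$. $\overline{A}$ is the disjoint union of all $A_I$. $N=T\rtimes W$ with $W$ the permutation matrices ($w(v_i)=v_{w(i)}$); $t\in T$ induced by $\mathrm{diag}(d_1,\dots,d_n)$ acts on $A_I$ by translation by $\sum_{i\in I}-v(d_i)\overline{\eta}^I_i$, and $w\in W$ acts by the linear maps $A_I\to A_{w(I)}$, $\overline\eta^I_i\mapsto\overline\eta^{w(I)}_{w(i)}$. Topology on $\overline A$: for nonempty $I\subset\underline{n}$ (strict) let $\Delta_I=\sum_{i\notin I}\mathbb{R}_{\ge0}\eta_i$ and for $U\subset A$ open bounded let $\Gamma^I_U=(U+\Delta_I)\cup\bigcup_{I\subseteq J\subset\underline n,\,J\neq\underline n}s_J(U+\Delta_I)$; a base of the topology consists of the open subsets of $A$ and all $\Gamma^I_U$. The map $\varphi$: for $x=\sum_{i\in I}x_i\overline{\eta}^I_i\in A_I$, $\varphi(x)$ is the class of the seminorm $\gamma(\lambda_1v_1+\dots+\lambda_nv_n)=\max\{|\lambda_i|q^{-x_i}: i\in I\}$ (well defined and bijective $\overline A\to\mathcal S_c$). *)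

theory Defs
  imports "HOL-Analysis.Analysis"
begin

definition absv :: "('k::field \<Rightarrow> int) \<Rightarrow> nat \<Rightarrow> 'k \<Rightarrow> real" where
  "absv v q x = (if x = 0 then 0 else real q powr (- real_of_int (v x)))"

text \<open>K is a non-archimedean local field with normalized (surjective onto Z) discrete
  valuation v, complete for |.|, with finite residue field of cardinality q.\<close>
definition nonarch_local_field :: "('k::field \<Rightarrow> int) \<Rightarrow> nat \<Rightarrow> bool" where
  "nonarch_local_field v q \<longleftrightarrow>
     (\<forall>x y. x \<noteq> 0 \<longrightarrow> y \<noteq> 0 \<longrightarrow> v (x * y) = v x + v y) \<and>
     (\<forall>x y. x \<noteq> 0 \<longrightarrow> y \<noteq> 0 \<longrightarrow> x + y \<noteq> 0 \<longrightarrow> v (x + y) \<ge> min (v x) (v y)) \<and>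
     (\<forall>k. \<exists>x. x \<noteq> 0 \<and> v x = k) \<and>
     (let Ov = {x. x = 0 \<or> v x \<ge> 0};
          r = {(x, y). x \<in> Ov \<and> y \<in> Ov \<and> (x - y = 0 \<or> v (x - y) > 0)}
      in finite (Ov // r) \<and> card (Ov // r) = q) \<and>
     (\<forall>f :: nat \<Rightarrow> 'k.
        (\<forall>e>0. \<exists>N. \<forall>m\<ge>N. \<forall>n\<ge>N. absv v q (f m - f n) < e) \<longrightarrow>
        (\<exists>L. \<forall>e>0. \<exists>N. \<forall>n\<ge>N. absv v q (f n - L) < e))"

section \<open>Seminorms on V = K^n (coordinates w.r.t. the basis v_1..v_n)\<close>

definition basis_vec :: "'n \<Rightarrow> ('n \<Rightarrow> 'k::field)" where
  "basis_vec i = (\<lambda>j. if j = i then 1 else 0)"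

definition is_seminorm :: "('k::field \<Rightarrow> int) \<Rightarrow> nat \<Rightarrow> (('n \<Rightarrow> 'k) \<Rightarrow> real) \<Rightarrow> bool" where
  "is_seminorm v q \<gamma> \<longleftrightarrow>
     (\<forall>x. \<gamma> x \<ge> 0) \<and> (\<exists>x. \<gamma> x \<noteq> 0) \<and>
     (\<forall>c x. \<gamma> (\<lambda>i. c * x i) = absv v q c * \<gamma> x) \<and>
     (\<forall>x y. \<gamma> (\<lambda>i. x i + y i) \<le> max (\<gamma> x) (\<gamma> y))"

definition is_canonical :: "('k::field \<Rightarrow> int) \<Rightarrow> nat \<Rightarrow> (('n::finite \<Rightarrow> 'k) \<Rightarrow> real) \<Rightarrow> bool" where
  "is_canonical v q \<gamma> \<longleftrightarrow>
     (\<forall>x. \<gamma> x = Max ((\<lambda>i. absv v q (x i) * \<gamma> (basis_vec i)) ` UNIV))"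

definition Sc' :: "('k::field \<Rightarrow> int) \<Rightarrow> nat \<Rightarrow> (('n::finite \<Rightarrow> 'k) \<Rightarrow> real) set" where
  "Sc' v q = {\<gamma>. is_seminorm v q \<gamma> \<and> is_canonical v q \<gamma>}"

definition Sc'_top :: "('k::field \<Rightarrow> int) \<Rightarrow> nat \<Rightarrow> (('n::finite \<Rightarrow> 'k) \<Rightarrow> real) topology" where
  "Sc'_top v q = subtopology (product_topology (\<lambda>_. euclideanreal) UNIV) (Sc' v q)"

definition sclass :: "('k::field \<Rightarrow> int) \<Rightarrow> nat \<Rightarrow> (('n::finite \<Rightarrow> 'k) \<Rightarrow> real)
    \<Rightarrow> (('n \<Rightarrow> 'k) \<Rightarrow> real) set" where
  "sclass v q \<gamma> = {\<gamma>' \<in> Sc' v q. \<exists>r>0. \<gamma>' = (\<lambda>x. r * \<gamma> x)}"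

definition quotient_topology :: "'a topology \<Rightarrow> ('a \<Rightarrow> 'b) \<Rightarrow> 'b topology" where
  "quotient_topology X f =
     topology (\<lambda>U. U \<subseteq> f ` topspace X \<and> openin X {x \<in> topspace X. f x \<in> U})"

definition Sc_top :: "('k::field \<Rightarrow> int) \<Rightarrow> nat \<Rightarrow> ((('n::finite \<Rightarrow> 'k) \<Rightarrow> real) set) topology" where
  "Sc_top v q = quotient_topology (Sc'_top v q) (sclass v q)"

text \<open>An element \<Sum>_{i\<in>I} y_i \<eta>^I_i of A_I is represented by the normalized vector
  nrm I y (supported on I, coordinates summing to 0); Abar is the set of pairs (I, a)
  with I nonempty and a normalized; A = A_UNIV.\<close>
definition nrm :: "'n::finite set \<Rightarrow> real^'n \<Rightarrow> real^'n" where
  "nrm I y = (\<chi> i. if i \<in> I then y $ i - (\<Sum>j\<in>I. y $ j) / real (card I) else 0)"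

definition Aset :: "(real^'n::finite) set" where
  "Aset = {a. (\<Sum>i\<in>UNIV. a $ i) = 0}"

definition Abar :: "('n::finite set \<times> (real^'n)) set" where
  "Abar = {(I, a). I \<noteq> {} \<and> nrm I a = a}"

definition Delta :: "'n::finite set \<Rightarrow> (real^'n) set" where
  "Delta I = {t. \<forall>i. (i \<in> I \<longrightarrow> t $ i = 0) \<and> (i \<notin> I \<longrightarrow> t $ i \<ge> 0)}"

definition UDelta :: "(real^'n::finite) set \<Rightarrow> 'n set \<Rightarrow> (real^'n) set" where
  "UDelta U I = {nrm UNIV (u + t) | u t. u \<in> U \<and> t \<in> Delta I}"

definition sJ :: "'n::finite set \<Rightarrow> real^'n \<Rightarrow> ('n set \<times> (real^'n))" where
  "sJ J a = (J, nrm J a)"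

definition Gamma :: "'n::finite set \<Rightarrow> (real^'n) set \<Rightarrow> ('n set \<times> (real^'n)) set" where
  "Gamma I U = (\<lambda>a. (UNIV, a)) ` UDelta U I \<union>
     (\<Union>J\<in>{J. I \<subseteq> J \<and> J \<noteq> UNIV}. sJ J ` UDelta U I)"

definition Abar_base :: "('n::finite set \<times> (real^'n)) set set" where
  "Abar_base =
     {(\<lambda>a. (UNIV, a)) ` U | U. openin (top_of_set Aset) U} \<union>
     {Gamma I U | I U. I \<noteq> {} \<and> I \<noteq> UNIV \<and> openin (top_of_set Aset) U \<and> bounded U}"

definition Abar_top :: "('n::finite set \<times> (real^'n)) topology" where
  "Abar_top = topology_generated_by Abar_base"

definition phi :: "('k::field \<Rightarrow> int) \<Rightarrow> nat \<Rightarrow> ('n::finite set \<times> (real^'n))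
    \<Rightarrow> (('n \<Rightarrow> 'k) \<Rightarrow> real) set" where
  "phi v q p = (case p of (I, a) \<Rightarrow>
     sclass v q (\<lambda>x. Max ((\<lambda>i. absv v q (x i) * real q powr (- (a $ i))) ` I)))"

text \<open>An element of N is represented by the matrix diag(d_1..d_n) * w (d_i \<noteq> 0,
  w a permutation with w(v_i) = v_(w i)); it acts on V by
  (n x) j = d j * x (inv w j), so n^{-1} y = (\<lambda>i. y (w i) / d (w i)).\<close>
definition ninv :: "('n \<Rightarrow> 'k::field) \<Rightarrow> ('n \<Rightarrow> 'n) \<Rightarrow> ('n \<Rightarrow> 'k) \<Rightarrow> ('n \<Rightarrow> 'k)" where
  "ninv d w y = (\<lambda>i. y (w i) / d (w i))"

definition N_act_Sc :: "('n \<Rightarrow> 'k::field) \<Rightarrow> ('n \<Rightarrow> 'n)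
    \<Rightarrow> (('n \<Rightarrow> 'k) \<Rightarrow> real) set \<Rightarrow> (('n \<Rightarrow> 'k) \<Rightarrow> real) set" where
  "N_act_Sc d w C = (\<lambda>\<gamma>. \<gamma> \<circ> ninv d w) ` C"

definition T_act :: "('k::field \<Rightarrow> int) \<Rightarrow> ('n::finite \<Rightarrow> 'k)
    \<Rightarrow> ('n set \<times> (real^'n)) \<Rightarrow> ('n set \<times> (real^'n))" where
  "T_act v d p = (case p of (I, a) \<Rightarrow> (I, nrm I (\<chi> i. a $ i - real_of_int (v (d i)))))"

definition W_act :: "('n::finite \<Rightarrow> 'n) \<Rightarrow> ('n set \<times> (real^'n)) \<Rightarrow> ('n set \<times> (real^'n))" where
  "W_act w p = (case p of (I, a) \<Rightarrow> (w ` I, nrm (w ` I) (\<chi> j. a $ (inv w j))))"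

definition N_act_Abar :: "('k::field \<Rightarrow> int) \<Rightarrow> ('n::finite \<Rightarrow> 'k) \<Rightarrow> ('n \<Rightarrow> 'n)
    \<Rightarrow> ('n set \<times> (real^'n)) \<Rightarrow> ('n set \<times> (real^'n))" where
  "N_act_Abar v d w p = T_act v d (W_act w p)"

end

theory Submission
  imports Defs
begin

text \<open>A canonical seminorm is determined by its values \<open>c i\<close> on the basis vectors, and
  \<open>c \<mapsto> (\<lambda>x. max\<^sub>i \<bar>x i\<bar> * c i)\<close> is a homeomorphism from the nonzero vectors \<open>c \<ge> 0\<close> onto \<open>Sc'\<close>,
  pointwise convergence of seminorms being convergence of their coefficients. Through it,
  \<open>phi (I, a)\<close> is the class of the vector equal to \<open>q powr - a i\<close> on \<open>I\<close> and to 0 off \<open>I\<close>, and the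
  inverse sends \<open>c\<close> to its support together with the normalisation of \<open>- log q c\<close>.

  Rescaling \<open>c\<close> so that its largest entry is 1 makes \<open>phi\<close> continuous: in a neighbourhood
  \<open>Gamma J U\<close> of a point of the face \<open>A\<^sub>J\<close> the coordinates outside \<open>J\<close> are pushed far up, so the
  corresponding coefficients are small. Conversely, the coefficient vectors of the points of
  \<open>Gamma I U\<close> are those with \<open>c i = q powr - y i\<close> on \<open>I\<close> and \<open>c i < q powr - y i\<close> off \<open>I\<close> for some \<open>y\<close>
  whose normalisation lies in \<open>U\<close>, an open condition since \<open>U\<close> is open. Equivariance amounts to
  \<open>\<bar>x / d\<bar> = \<bar>x\<bar> * q powr v d\<close>.\<close>

lemma continuous_on_coordinate [continuous_intros]:
  "continuous_on S (\<lambda>x :: 'a \<Rightarrow> 'b::topological_space. x i)"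
  by (rule continuous_on_subset[OF continuous_on_product_coordinates]) simp

lemma continuous_on_Max_finite:
  fixes f :: "'i \<Rightarrow> 'a::topological_space \<Rightarrow> 'b::linorder_topology"
  assumes "finite S" "S \<noteq> {}" "\<And>i. i \<in> S \<Longrightarrow> continuous_on T (f i)"
  shows "continuous_on T (\<lambda>x. Max ((\<lambda>i. f i x) ` S))"
  using assms
proof (induction S rule: finite_ne_induct)
  case (insert i F)
  then show ?case by (auto intro!: continuous_on_max)
qed simp

lemma continuous_on_Min_finite:
  fixes f :: "'i \<Rightarrow> 'a::topological_space \<Rightarrow> 'b::linorder_topology"
  assumes "finite S" "S \<noteq> {}" "\<And>i. i \<in> S \<Longrightarrow> continuous_on T (f i)"
  shows "continuous_on T (\<lambda>x. Min ((\<lambda>i. f i x) ` S))"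
  using assms
proof (induction S rule: finite_ne_induct)
  case (insert i F)
  then show ?case by (auto intro!: continuous_on_min)
qed simp

lemma Max_zero_extension:
  fixes f :: "'n::finite \<Rightarrow> 'a::linordered_semidom"
  assumes "I \<noteq> {}" "\<forall>i\<in>I. 0 \<le> f i"
  shows "Max (range (\<lambda>i. if i \<in> I then f i else 0)) = Max (f ` I)"
proof -
  have "Max (f ` I) \<in> f ` I" using assms(1) by simp
  then obtain i0 where i0: "i0 \<in> I" "Max (f ` I) = f i0" by auto
  show ?thesis
  proof (rule Max_eqI)
    show "Max (f ` I) \<in> range (\<lambda>i. if i \<in> I then f i else 0)"
      using i0 by (auto simp: image_iff intro!: exI[of _ i0])
    have le: "\<forall>i\<in>I. f i \<le> Max (f ` I)" by simp
    have nonneg: "0 \<le> Max (f ` I)" using i0 assms(2) by simp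
    show "y \<le> Max (f ` I)" if "y \<in> range (\<lambda>i. if i \<in> I then f i else 0)" for y
      using that le nonneg by auto
  qed simp
qed

lemma exists_pos_in_open_preimage:
  fixes f :: "real \<Rightarrow> 'a::topological_space"
  assumes "open S" "continuous_on UNIV f" "f 0 \<in> S"
  obtains s where "0 < s" "f s \<in> S"
proof -
  have "open (f -` S)" using continuous_open_preimage[OF assms(2) open_UNIV assms(1)] by simp
  then obtain e where "0 < e" "ball 0 e \<subseteq> f -` S" using assms(3) by (auto elim: openE)
  moreover have "e / 2 \<in> ball 0 e" using \<open>0 < e\<close> by simp
  ultimately have "f (e / 2) \<in> S" by blast
  then show thesis using that[of "e / 2"] \<open>0 < e\<close> by simp
qed

lemma openin_quotient_topology:
  "openin (quotient_topology X f) U \<longleftrightarrow> U \<subseteq> f ` topspace X \<and> openin X {x \<in> topspace X. f x \<in> U}"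
proof -
  have "istopology (\<lambda>U. U \<subseteq> f ` topspace X \<and> openin X {x \<in> topspace X. f x \<in> U})"
  proof -
    have "{x \<in> topspace X. f x \<in> S \<inter> T} = {x \<in> topspace X. f x \<in> S} \<inter> {x \<in> topspace X. f x \<in> T}"
      and "{x \<in> topspace X. f x \<in> \<Union>K} = (\<Union>U\<in>K. {x \<in> topspace X. f x \<in> U})" for S T K
      by auto
    then show ?thesis unfolding istopology_def by auto
  qed
  then show ?thesis by (simp add: quotient_topology_def topology_inverse')
qed

lemma quotient_map_quotient_topology: "quotient_map X (quotient_topology X f) f"
proof -
  have "topspace (quotient_topology X f) = f ` topspace X"
  proof
    have "{x \<in> topspace X. f x \<in> f ` topspace X} = topspace X" by auto
    then have "openin (quotient_topology X f) (f ` topspace X)"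
      by (simp add: openin_quotient_topology)
    then show "f ` topspace X \<subseteq> topspace (quotient_topology X f)" by (rule openin_subset)
  qed (use openin_quotient_topology[of X f "topspace (quotient_topology X f)"] in simp)
  then show ?thesis unfolding quotient_map_def by (auto simp: openin_quotient_topology)
qed

lemma nonarch_local_field_mult:
  "nonarch_local_field v q \<Longrightarrow> x \<noteq> 0 \<Longrightarrow> y \<noteq> 0 \<Longrightarrow> v (x * y) = v x + v y"
  unfolding nonarch_local_field_def by blast

lemma nonarch_local_field_add:
  "nonarch_local_field v q \<Longrightarrow> x \<noteq> 0 \<Longrightarrow> y \<noteq> 0 \<Longrightarrow> x + y \<noteq> 0 \<Longrightarrow> min (v x) (v y) \<le> v (x + y)"
  unfolding nonarch_local_field_def by blast

lemma nonarch_local_field_one: "nonarch_local_field v q \<Longrightarrow> v 1 = 0"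
  using nonarch_local_field_mult[of v q 1 1] by simp

text \<open>The residue field contains the distinct classes of 0 and 1.\<close>
lemma nonarch_local_field_q_gt_1:
  assumes "nonarch_local_field v q"
  shows "1 < real q"
proof -
  define Ov where "Ov = {x. x = 0 \<or> v x \<ge> 0}"
  define r where "r = {(x, y). x \<in> Ov \<and> y \<in> Ov \<and> (x - y = 0 \<or> v (x - y) > 0)}"
  have fin: "finite (Ov // r)" and card: "card (Ov // r) = q"
    using assms unfolding nonarch_local_field_def Let_def Ov_def r_def by auto
  have v1: "v 1 = 0" using nonarch_local_field_one[OF assms] .
  then have "0 \<in> Ov" "1 \<in> Ov" by (auto simp: Ov_def)
  then have sub: "{r `` {0}, r `` {1}} \<subseteq> Ov // r" by (auto simp: quotient_def)
  have "(0, 0) \<in> r" "(1, 0) \<notin> r" using \<open>0 \<in> Ov\<close> v1 by (auto simp: r_def)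
  then have "r `` {0} \<noteq> r `` {1}" by auto
  then have "2 \<le> card (Ov // r)"
    using card_mono[OF fin sub] by simp
  then show ?thesis using card by simp
qed

lemma absv_nonneg: "0 \<le> absv v q x"
  by (simp add: absv_def)

lemma absv_zero [simp]: "absv v q 0 = 0"
  by (simp add: absv_def)

lemma absv_one: "nonarch_local_field v q \<Longrightarrow> absv v q 1 = 1"
  using nonarch_local_field_one[of v q] nonarch_local_field_q_gt_1[of v q] by (simp add: absv_def)

lemma absv_mult:
  assumes "nonarch_local_field v q"
  shows "absv v q (x * y) = absv v q x * absv v q y"
  using nonarch_local_field_mult[OF assms, of x y] nonarch_local_field_q_gt_1[OF assms]
  by (auto simp: absv_def powr_add[symmetric])

lemma absv_divide:
  assumes "nonarch_local_field v q" "d \<noteq> 0"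
  shows "absv v q (x / d) = absv v q x * real q powr v d"
proof (cases "x = 0")
  case False
  have "v (x / d * d) = v (x / d) + v d"
    using nonarch_local_field_mult[OF assms(1), of "x / d" d] False assms(2) by simp
  then have "v (x / d) = v x - v d" using assms(2) by simp
  then show ?thesis
    using False assms(2) nonarch_local_field_q_gt_1[OF assms(1)]
    by (simp add: absv_def powr_add[symmetric])
qed simp

lemma absv_ultrametric:
  assumes "nonarch_local_field v q"
  shows "absv v q (x + y) \<le> max (absv v q x) (absv v q y)"
proof (cases "x = 0 \<or> y = 0 \<or> x + y = 0")
  case True
  then show ?thesis using absv_nonneg[of v q] by (auto simp: max_def)
next
  case False
  then show ?thesis
    using nonarch_local_field_add[OF assms, of x y] nonarch_local_field_q_gt_1[OF assms]
    by (auto simp: absv_def max_def min_def split: if_splits)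
qed

lemma nrm_nth: "nrm I y $ i = (if i \<in> I then y $ i - (\<Sum>j\<in>I. y $ j) / real (card I) else 0)"
  by (simp add: nrm_def)

lemma nrm_shift:
  fixes I :: "'n::finite set"
  assumes "\<forall>i\<in>I. y $ i = z $ i + k"
  shows "nrm I y = nrm I z"
proof (cases "I = {}")
  case False
  have "(\<Sum>j\<in>I. y $ j) = (\<Sum>j\<in>I. z $ j) + real (card I) * k"
    using assms by (simp add: sum.distrib)
  then have "(\<Sum>j\<in>I. y $ j) / real (card I) = (\<Sum>j\<in>I. z $ j) / real (card I) + k"
    using False by (simp add: add_divide_distrib card_gt_0_iff)
  then show ?thesis using assms by (simp add: vec_eq_iff nrm_nth)
qed (simp add: nrm_def)

lemma nrm_eq_imp_shift:
  assumes "nrm I y = nrm I z"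
  obtains k where "\<forall>i\<in>I. y $ i = z $ i + k"
proof
  show "\<forall>i\<in>I. y $ i = z $ i + ((\<Sum>j\<in>I. y $ j) / real (card I) - (\<Sum>j\<in>I. z $ j) / real (card I))"
  proof
    fix i assume "i \<in> I"
    moreover have "nrm I y $ i = nrm I z $ i" using assms by simp
    ultimately show "y $ i = z $ i + ((\<Sum>j\<in>I. y $ j) / real (card I) - (\<Sum>j\<in>I. z $ j) / real (card I))"
      by (simp add: nrm_nth)
  qed
qed

lemma nrm_nrm [simp]: "nrm I (nrm J y) = nrm I y" if "I \<subseteq> J"
  using that by (intro nrm_shift[where k = "- (\<Sum>j\<in>J. y $ j) / real (card J)"]) (auto simp: nrm_nth)

lemma nrm_cong: "(\<forall>i\<in>I. y $ i = z $ i) \<Longrightarrow> nrm I y = nrm I z"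
  using nrm_shift[of I y z 0] by simp

lemma nrm_in_Aset: "nrm I y \<in> Aset"
proof (cases "I = {}")
  case False
  have "(\<Sum>i\<in>UNIV. nrm I y $ i) = (\<Sum>i\<in>I. y $ i - (\<Sum>j\<in>I. y $ j) / real (card I))"
    by (simp add: nrm_nth sum.If_cases)
  also have "\<dots> = 0" using False by (simp add: sum_subtractf card_gt_0_iff)
  finally show ?thesis by (simp add: Aset_def)
qed (simp add: Aset_def nrm_def)

lemma nrm_UNIV_Aset: "a \<in> Aset \<Longrightarrow> nrm UNIV a = a"
  by (simp add: Aset_def vec_eq_iff nrm_nth)

lemma continuous_on_nrm [continuous_intros]:
  assumes "continuous_on S f"
  shows "continuous_on S (\<lambda>x. nrm I (f x))"
  unfolding nrm_def
proof (rule continuous_on_vec_lambda)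
  fix i
  show "continuous_on S (\<lambda>x. if i \<in> I then f x $ i - (\<Sum>j\<in>I. f x $ j) / real (card I) else 0)"
    using assms by (cases "i \<in> I") (auto intro!: continuous_intros)
qed

lemma Abar_iff: "(I, a) \<in> Abar \<longleftrightarrow> I \<noteq> {} \<and> nrm I a = a"
  by (simp add: Abar_def)

lemma mem_Gamma_iff:
  "p \<in> Gamma I U \<longleftrightarrow> (\<exists>K u t. I \<subseteq> K \<and> u \<in> U \<and> t \<in> Delta I \<and> p = (K, nrm K (u + t)))"
proof
  assume "p \<in> Gamma I U"
  then consider (interior) x where "x \<in> UDelta U I" "p = (UNIV, x)"
    | (face) K x where "I \<subseteq> K" "x \<in> UDelta U I" "p = (K, nrm K x)"
    unfolding Gamma_def sJ_def by blast
  then show "\<exists>K u t. I \<subseteq> K \<and> u \<in> U \<and> t \<in> Delta I \<and> p = (K, nrm K (u + t))"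
  proof cases
    case interior
    then show ?thesis unfolding UDelta_def by blast
  next
    case face
    then obtain u t where "u \<in> U" "t \<in> Delta I" "p = (K, nrm K (nrm UNIV (u + t)))"
      unfolding UDelta_def by blast
    with face(1) show ?thesis by (intro exI[of _ K] exI[of _ u] exI[of _ t]) simp
  qed
next
  assume "\<exists>K u t. I \<subseteq> K \<and> u \<in> U \<and> t \<in> Delta I \<and> p = (K, nrm K (u + t))"
  then obtain K u t where K: "I \<subseteq> K" "u \<in> U" "t \<in> Delta I" "p = (K, nrm K (u + t))"
    by blast
  then have x: "nrm UNIV (u + t) \<in> UDelta U I" by (auto simp: UDelta_def)
  show "p \<in> Gamma I U"
  proof (cases "K = UNIV")
    case True
    then show ?thesis using x K(4) unfolding Gamma_def by blast
  next
    case False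
    then have "p = sJ K (nrm UNIV (u + t))" using K(4) by (simp add: sJ_def)
    then show ?thesis using x K(1) False unfolding Gamma_def by blast
  qed
qed

lemma nrm_mem_Gamma: "u \<in> U \<Longrightarrow> (I, nrm I u) \<in> Gamma I U"
  unfolding mem_Gamma_iff by (rule exI[of _ I], rule exI[of _ u], rule exI[of _ 0]) (auto simp: Delta_def)

lemma Gamma_UNIV:
  assumes "U \<subseteq> Aset"
  shows "Gamma UNIV U = (\<lambda>a. (UNIV, a)) ` U"
proof
  show "Gamma UNIV U \<subseteq> (\<lambda>a. (UNIV, a)) ` U"
  proof
    fix p assume "p \<in> Gamma UNIV U"
    then obtain K u t where "UNIV \<subseteq> K" "u \<in> U" "t \<in> Delta UNIV" "p = (K, nrm K (u + t))"
      by (auto simp: mem_Gamma_iff)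
    moreover have "t = 0" using \<open>t \<in> Delta UNIV\<close> by (simp add: Delta_def vec_eq_iff)
    ultimately show "p \<in> (\<lambda>a. (UNIV, a)) ` U" using assms by (auto simp: nrm_UNIV_Aset top_unique)
  qed
  show "(\<lambda>a. (UNIV, a)) ` U \<subseteq> Gamma UNIV U"
  proof (rule image_subsetI)
    fix a assume "a \<in> U"
    then show "(UNIV, a) \<in> Gamma UNIV U"
      using nrm_mem_Gamma[of a U UNIV] nrm_UNIV_Aset[of a] assms by auto
  qed
qed

lemma Abar_base_imp_Gamma:
  assumes "B \<in> Abar_base"
  obtains I U where "I \<noteq> {}" "openin (top_of_set Aset) U" "B = Gamma I U"
proof -
  from assms consider (interior) U where "openin (top_of_set Aset) U" "B = (\<lambda>a. (UNIV, a)) ` U"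
    | (face) I U where "I \<noteq> {}" "openin (top_of_set Aset) U" "B = Gamma I U"
    unfolding Abar_base_def by blast
  then show thesis
  proof cases
    case interior
    then show thesis using that[of UNIV U] Gamma_UNIV[OF openin_imp_subset] by auto
  qed (rule that)
qed

lemma openin_Abar_top_Gamma:
  assumes "I \<noteq> {}" "openin (top_of_set Aset) U" "bounded U"
  shows "openin Abar_top (Gamma I U)"
proof -
  have "Gamma I U \<in> Abar_base"
  proof (cases "I = UNIV")
    case True
    then have "Gamma I U = (\<lambda>a. (UNIV, a)) ` U"
      using Gamma_UNIV[OF openin_imp_subset[OF assms(2)]] by simp
    then show ?thesis using assms(2) unfolding Abar_base_def by blast
  next
    case False
    then show ?thesis using assms unfolding Abar_base_def by blast
  qed
  then show ?thesis unfolding Abar_top_def by (rule topology_generated_by_Basis)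
qed

lemma Gamma_subset_Abar: "I \<noteq> {} \<Longrightarrow> Gamma I U \<subseteq> Abar"
  by (auto simp: mem_Gamma_iff Abar_iff)

lemma topspace_Abar_top: "topspace Abar_top = Abar"
proof -
  have "\<Union>Abar_base \<subseteq> Abar"
    using Gamma_subset_Abar by (blast elim: Abar_base_imp_Gamma)
  moreover have "p \<in> \<Union>Abar_base" if "p \<in> Abar" for p :: "'n set \<times> (real^'n)"
  proof -
    obtain I a where p: "p = (I, a)" "I \<noteq> {}" "nrm I a = a"
      using \<open>p \<in> Abar\<close> by (cases p) (auto simp: Abar_iff)
    define U where "U = Aset \<inter> ball a 1"
    have "openin (top_of_set Aset) U" "bounded U" by (auto simp: U_def openin_open_Int)
    then have "openin Abar_top (Gamma I U)" by (rule openin_Abar_top_Gamma[OF \<open>I \<noteq> {}\<close>])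
    moreover have "a \<in> U" using nrm_in_Aset[of I a] p by (simp add: U_def)
    then have "p \<in> Gamma I U" using nrm_mem_Gamma[of a U I] p by simp
    ultimately show ?thesis
      using openin_subset[of Abar_top] unfolding Abar_top_def topology_generated_by_topspace by blast
  qed
  ultimately show ?thesis unfolding Abar_top_def topology_generated_by_topspace by blast
qed

section \<open>Canonical seminorms and their basis values\<close>

definition coeff_space :: "('n::finite \<Rightarrow> real) set" where
  "coeff_space = {c. (\<forall>i. 0 \<le> c i) \<and> (\<exists>i. c i \<noteq> 0)}"

definition basis_seminorm :: "('k::field \<Rightarrow> int) \<Rightarrow> nat \<Rightarrow> ('n::finite \<Rightarrow> real) \<Rightarrow> ('n \<Rightarrow> 'k) \<Rightarrow> real"
  where "basis_seminorm v q c x = Max ((\<lambda>i. absv v q (x i) * c i) ` UNIV)"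

definition basis_values :: "(('n::finite \<Rightarrow> 'k::field) \<Rightarrow> real) \<Rightarrow> 'n \<Rightarrow> real" where
  "basis_values \<gamma> i = \<gamma> (basis_vec i)"

lemma basis_seminorm_ge: "absv v q (x i) * c i \<le> basis_seminorm v q c x"
  unfolding basis_seminorm_def by (rule Max_ge) auto

lemma basis_seminorm_le_iff: "basis_seminorm v q c x \<le> r \<longleftrightarrow> (\<forall>i. absv v q (x i) * c i \<le> r)"
  unfolding basis_seminorm_def by (subst Max_le_iff) auto

lemma basis_seminorm_basis_vec:
  assumes "nonarch_local_field v q" "\<forall>i. 0 \<le> c i"
  shows "basis_seminorm v q c (basis_vec i) = c i"
  unfolding basis_seminorm_def
proof (rule Max_eqI)
  show "c i \<in> range (\<lambda>j. absv v q (basis_vec i j) * c j)"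
    using absv_one[OF assms(1)] by (auto simp: basis_vec_def image_iff intro!: exI[of _ i])
qed (use absv_one[OF assms(1)] assms(2) in \<open>auto simp: basis_vec_def\<close>)

lemma basis_seminorm_scale:
  assumes "0 \<le> r"
  shows "basis_seminorm v q (\<lambda>i. r * c i) x = r * basis_seminorm v q c x"
proof -
  have "mono ((*) r)" using assms by (simp add: mono_def mult_left_mono)
  then show ?thesis
    unfolding basis_seminorm_def by (subst mono_Max_commute) (auto simp: image_image mult.left_commute)
qed

lemma basis_seminorm_in_Sc':
  assumes nlf: "nonarch_local_field v q" and c: "c \<in> coeff_space"
  shows "basis_seminorm v q c \<in> Sc' v q"
proof -
  have c_nonneg: "\<forall>i. 0 \<le> c i" and "\<exists>i. c i \<noteq> 0" using c by (auto simp: coeff_space_def)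
  then obtain i0 where "basis_seminorm v q c (basis_vec i0) \<noteq> 0"
    using basis_seminorm_basis_vec[OF nlf] by metis
  moreover have "0 \<le> basis_seminorm v q c x" for x
    using basis_seminorm_ge[of v q x _ c] absv_nonneg c_nonneg by (meson order_trans zero_le_mult_iff)
  moreover have "basis_seminorm v q c (\<lambda>i. a * x i) = absv v q a * basis_seminorm v q c x" for a x
    using basis_seminorm_scale[of "absv v q a" v q c x] absv_nonneg[of v q a]
    by (simp add: basis_seminorm_def absv_mult[OF nlf] mult.assoc mult.left_commute)
  moreover have "basis_seminorm v q c (\<lambda>i. x i + y i)
      \<le> max (basis_seminorm v q c x) (basis_seminorm v q c y)" for x y
    unfolding basis_seminorm_le_iff
  proof
    fix i
    have "absv v q (x i + y i) * c i \<le> max (absv v q (x i)) (absv v q (y i)) * c i"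
      using absv_ultrametric[OF nlf] c_nonneg by (intro mult_right_mono) auto
    also have "\<dots> \<le> max (basis_seminorm v q c x) (basis_seminorm v q c y)"
      using basis_seminorm_ge[of v q x i c] basis_seminorm_ge[of v q y i c] c_nonneg
      by (auto simp: max_mult_distrib_right)
    finally show "absv v q (x i + y i) * c i \<le> max (basis_seminorm v q c x) (basis_seminorm v q c y)" .
  qed
  moreover have "is_canonical v q (basis_seminorm v q c)"
    unfolding is_canonical_def using basis_seminorm_basis_vec[OF nlf c_nonneg]
    by (simp add: basis_seminorm_def)
  ultimately show ?thesis unfolding Sc'_def is_seminorm_def by blast
qed

lemma basis_seminorm_basis_values:
  assumes "\<gamma> \<in> Sc' v q"
  shows "basis_seminorm v q (basis_values \<gamma>) = \<gamma>"
proof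
  fix x
  have "is_canonical v q \<gamma>" using assms by (simp add: Sc'_def)
  then show "basis_seminorm v q (basis_values \<gamma>) x = \<gamma> x"
    unfolding is_canonical_def basis_seminorm_def basis_values_def by metis
qed

lemma basis_values_in_coeff_space:
  assumes "\<gamma> \<in> Sc' v q"
  shows "basis_values \<gamma> \<in> coeff_space"
proof -
  obtain x where "\<gamma> x \<noteq> 0" using assms by (auto simp: Sc'_def is_seminorm_def)
  have "\<exists>i. basis_values \<gamma> i \<noteq> 0"
  proof (rule ccontr)
    assume "\<nexists>i. basis_values \<gamma> i \<noteq> 0"
    then have "basis_seminorm v q (basis_values \<gamma>) x = 0" by (simp add: basis_seminorm_def)
    with \<open>\<gamma> x \<noteq> 0\<close> show False by (simp add: basis_seminorm_basis_values[OF assms])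
  qed
  then show ?thesis
    using assms by (simp add: coeff_space_def Sc'_def is_seminorm_def basis_values_def)
qed

lemma basis_values_basis_seminorm:
  assumes "nonarch_local_field v q" "c \<in> coeff_space"
  shows "basis_values (basis_seminorm v q c) = c"
  using basis_seminorm_basis_vec[OF assms(1)] assms(2)
  by (auto simp: fun_eq_iff basis_values_def coeff_space_def)

lemma scale_in_Sc':
  assumes "nonarch_local_field v q" "\<gamma> \<in> Sc' v q" "0 < r"
  shows "(\<lambda>x. r * \<gamma> x) \<in> Sc' v q"
proof -
  have "(\<lambda>i. r * basis_values \<gamma> i) \<in> coeff_space"
    using basis_values_in_coeff_space[OF assms(2)] assms(3) by (auto simp: coeff_space_def)
  moreover have "(\<lambda>x. r * \<gamma> x) = basis_seminorm v q (\<lambda>i. r * basis_values \<gamma> i)"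
    using assms(3)
    by (simp add: fun_eq_iff basis_seminorm_scale basis_seminorm_basis_values[OF assms(2)])
  ultimately show ?thesis using basis_seminorm_in_Sc'[OF assms(1)] by simp
qed

lemma sclass_scale:
  assumes "nonarch_local_field v q" "\<gamma> \<in> Sc' v q" "0 < r"
  shows "sclass v q (\<lambda>x. r * \<gamma> x) = sclass v q \<gamma>"
proof (intro set_eqI iffI)
  fix g assume "g \<in> sclass v q (\<lambda>x. r * \<gamma> x)"
  then obtain s where "0 < s" "g \<in> Sc' v q" "g = (\<lambda>x. s * (r * \<gamma> x))" by (auto simp: sclass_def)
  then show "g \<in> sclass v q \<gamma>"
    using assms(3) unfolding sclass_def by (auto intro!: exI[of _ "s * r"])
next
  fix g assume "g \<in> sclass v q \<gamma>"
  then obtain s where "0 < s" "g \<in> Sc' v q" "g = (\<lambda>x. s * \<gamma> x)" by (auto simp: sclass_def)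
  then show "g \<in> sclass v q (\<lambda>x. r * \<gamma> x)"
    using assms(3) unfolding sclass_def by (auto intro!: exI[of _ "s / r"])
qed

lemma sclass_basis_seminorm_scale:
  assumes "nonarch_local_field v q" "c \<in> coeff_space" "0 < r"
  shows "sclass v q (basis_seminorm v q (\<lambda>i. r * c i)) = sclass v q (basis_seminorm v q c)"
proof -
  have "basis_seminorm v q (\<lambda>i. r * c i) = (\<lambda>x. r * basis_seminorm v q c x)"
    using assms(3) by (simp add: fun_eq_iff basis_seminorm_scale)
  then show ?thesis
    using sclass_scale[OF assms(1) basis_seminorm_in_Sc'[OF assms(1,2)] assms(3)] by simp
qed

lemma homeomorphic_maps_basis_seminorm:
  fixes v :: "'k::field \<Rightarrow> int"
  assumes "nonarch_local_field v q"
  shows "homeomorphic_maps (top_of_set coeff_space) (Sc'_top v q) (basis_seminorm v q) basis_values"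
proof -
  have "continuous_on coeff_space (\<lambda>c. basis_seminorm v q c x)" for x :: "'n::finite \<Rightarrow> 'k"
    unfolding basis_seminorm_def
    by (intro continuous_on_Max_finite continuous_intros) auto
  then have "continuous_map (top_of_set coeff_space) (Sc'_top v q) (basis_seminorm v q :: _ \<Rightarrow> ('n::finite \<Rightarrow> 'k) \<Rightarrow> real)"
    using basis_seminorm_in_Sc'[OF assms]
    by (auto simp: Sc'_top_def continuous_map_in_subtopology continuous_map_componentwise_UNIV)
  moreover have "continuous_map (Sc'_top v q) (top_of_set coeff_space) (basis_values :: _ \<Rightarrow> 'n::finite \<Rightarrow> real)"
    unfolding Sc'_top_def continuous_map_in_subtopology euclidean_product_topology[symmetric]
      continuous_map_componentwise_UNIV basis_values_def
    by (auto intro: continuous_map_from_subtopology continuous_map_product_projection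
        basis_values_in_coeff_space[unfolded basis_values_def])
  ultimately show ?thesis
    using basis_values_basis_seminorm[OF assms] basis_seminorm_basis_values
    by (auto simp: homeomorphic_maps_def Sc'_top_def)
qed

definition point_coeffs :: "nat \<Rightarrow> 'n::finite set \<times> (real^'n) \<Rightarrow> 'n \<Rightarrow> real" where
  "point_coeffs q p = (case p of (I, a) \<Rightarrow> \<lambda>i. if i \<in> I then real q powr - a $ i else 0)"

lemma phi_eq_sclass_point_coeffs:
  assumes "I \<noteq> {}"
  shows "phi v q (I, a) = sclass v q (basis_seminorm v q (point_coeffs q (I, a)))"
proof -
  have "basis_seminorm v q (point_coeffs q (I, a))
      = (\<lambda>x. Max ((\<lambda>i. absv v q (x i) * real q powr - a $ i) ` I))"
  proof
    fix x
    show "basis_seminorm v q (point_coeffs q (I, a)) x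
        = Max ((\<lambda>i. absv v q (x i) * real q powr - a $ i) ` I)"
      unfolding basis_seminorm_def point_coeffs_def
      using Max_zero_extension[OF assms, of "\<lambda>i. absv v q (x i) * real q powr - a $ i"]
      by (simp add: if_distrib absv_nonneg cong: if_cong)
  qed
  then show ?thesis by (simp add: phi_def)
qed

lemma point_coeffs_in_coeff_space: "0 < q \<Longrightarrow> I \<noteq> {} \<Longrightarrow> point_coeffs q (I, a) \<in> coeff_space"
  by (auto simp: coeff_space_def point_coeffs_def)

lemma phi_shift:
  assumes "nonarch_local_field v q" "I \<noteq> {}" "\<forall>i\<in>I. y $ i = z $ i + k"
  shows "phi v q (I, y) = phi v q (I, z)"
proof -
  have "0 < q" using nonarch_local_field_q_gt_1[OF assms(1)] by simp
  have "point_coeffs q (I, y) = (\<lambda>i. real q powr - k * point_coeffs q (I, z) i)"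
    using assms(3) by (auto simp: fun_eq_iff point_coeffs_def powr_add[symmetric] ac_simps)
  then show ?thesis
    using sclass_basis_seminorm_scale[OF assms(1) point_coeffs_in_coeff_space[OF \<open>0 < q\<close> assms(2)]]
      \<open>0 < q\<close> by (simp add: phi_eq_sclass_point_coeffs[OF assms(2)])
qed

lemma phi_nrm: "nonarch_local_field v q \<Longrightarrow> I \<noteq> {} \<Longrightarrow> phi v q (I, nrm I y) = phi v q (I, y)"
  by (rule phi_shift[where k = "- (\<Sum>j\<in>I. y $ j) / real (card I)"]) (auto simp: nrm_nth)

definition coeff_support :: "('n \<Rightarrow> real) \<Rightarrow> 'n set" where
  "coeff_support c = {i. c i \<noteq> 0}"

definition point_of_coeffs :: "nat \<Rightarrow> ('n::finite \<Rightarrow> real) \<Rightarrow> 'n set \<times> (real^'n)" where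
  "point_of_coeffs q c = (coeff_support c, nrm (coeff_support c) (\<chi> i. - log q (c i)))"

lemma coeff_support_nonempty: "c \<in> coeff_space \<Longrightarrow> coeff_support c \<noteq> {}"
  by (auto simp: coeff_support_def coeff_space_def)

lemma coeff_space_pos: "c \<in> coeff_space \<Longrightarrow> i \<in> coeff_support c \<Longrightarrow> 0 < c i"
  by (auto simp: coeff_support_def coeff_space_def less_le)

lemma point_of_coeffs_in_Abar: "c \<in> coeff_space \<Longrightarrow> point_of_coeffs q c \<in> Abar"
  by (simp add: point_of_coeffs_def Abar_iff coeff_support_nonempty)

lemma point_of_coeffs_point_coeffs:
  assumes "1 < real q" "(I, a) \<in> Abar"
  shows "point_of_coeffs q (point_coeffs q (I, a)) = (I, a)"
proof -
  have "coeff_support (point_coeffs q (I, a)) = I"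
    using assms(1) by (auto simp: coeff_support_def point_coeffs_def)
  moreover have "nrm I (\<chi> i. - log q (point_coeffs q (I, a) i)) = nrm I a"
    using assms(1) by (intro nrm_cong) (simp add: point_coeffs_def)
  ultimately show ?thesis using assms(2) by (simp add: point_of_coeffs_def Abar_iff)
qed

lemma phi_point_of_coeffs:
  assumes nlf: "nonarch_local_field v q" and c: "c \<in> coeff_space"
  shows "phi v q (point_of_coeffs q c) = sclass v q (basis_seminorm v q c)"
proof -
  define S where "S = coeff_support c"
  have "S \<noteq> {}" using coeff_support_nonempty[OF c] by (simp add: S_def)
  have "point_coeffs q (S, \<chi> i. - log q (c i)) = c"
    using nonarch_local_field_q_gt_1[OF nlf] coeff_space_pos[OF c]
    by (auto simp: fun_eq_iff point_coeffs_def S_def coeff_support_def)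
  have "phi v q (point_of_coeffs q c) = phi v q (S, \<chi> i. - log q (c i))"
    using phi_nrm[OF nlf \<open>S \<noteq> {}\<close>] by (simp add: point_of_coeffs_def S_def[symmetric])
  also have "\<dots> = sclass v q (basis_seminorm v q (point_coeffs q (S, \<chi> i. - log q (c i))))"
    by (rule phi_eq_sclass_point_coeffs[OF \<open>S \<noteq> {}\<close>])
  finally show ?thesis using \<open>point_coeffs q (S, \<chi> i. - log q (c i)) = c\<close> by simp
qed

lemma point_of_coeffs_scale:
  assumes "1 < real q" "c \<in> coeff_space" "0 < r"
  shows "point_of_coeffs q (\<lambda>i. r * c i) = point_of_coeffs q c"
proof -
  have "coeff_support (\<lambda>i. r * c i) = coeff_support c"
    using assms(3) by (simp add: coeff_support_def)
  moreover have "\<forall>i\<in>coeff_support c. 0 < c i" using coeff_space_pos[OF assms(2)] by blast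
  then have "nrm (coeff_support c) (\<chi> i. - log q (r * c i)) = nrm (coeff_support c) (\<chi> i. - log q (c i))"
    using assms by (intro nrm_shift[where k = "- log q r"]) (auto simp: log_mult)
  ultimately show ?thesis by (simp add: point_of_coeffs_def)
qed

definition phi_inv :: "('k::field \<Rightarrow> int) \<Rightarrow> nat \<Rightarrow> (('n::finite \<Rightarrow> 'k) \<Rightarrow> real) set
    \<Rightarrow> 'n set \<times> (real^'n)" where
  "phi_inv v q X = point_of_coeffs q (basis_values (SOME \<gamma>. \<gamma> \<in> X))"

lemma phi_inv_sclass:
  assumes nlf: "nonarch_local_field v q" and \<gamma>: "\<gamma> \<in> Sc' v q"
  shows "phi_inv v q (sclass v q \<gamma>) = point_of_coeffs q (basis_values \<gamma>)"
proof -
  have "\<gamma> \<in> sclass v q \<gamma>" using \<gamma> unfolding sclass_def by (auto intro!: exI[of _ 1])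
  then have "(SOME g. g \<in> sclass v q \<gamma>) \<in> sclass v q \<gamma>" by (rule someI[where P = "\<lambda>g. g \<in> sclass v q \<gamma>"])
  then obtain r where "0 < r" "(SOME g. g \<in> sclass v q \<gamma>) = (\<lambda>x. r * \<gamma> x)"
    by (auto simp: sclass_def)
  then show ?thesis
    using point_of_coeffs_scale[OF nonarch_local_field_q_gt_1[OF nlf] basis_values_in_coeff_space[OF \<gamma>]]
    by (simp add: phi_inv_def basis_values_def[abs_def])
qed

lemma phi_inv_phi:
  assumes nlf: "nonarch_local_field v q" and p: "(I, a) \<in> Abar"
  shows "phi_inv v q (phi v q (I, a)) = (I, a)"
proof -
  define c where "c = point_coeffs q (I, a)"
  have "1 < real q" "I \<noteq> {}" using nonarch_local_field_q_gt_1[OF nlf] p by (auto simp: Abar_iff)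
  then have c: "c \<in> coeff_space" by (simp add: c_def point_coeffs_in_coeff_space)
  have "phi_inv v q (phi v q (I, a)) = phi_inv v q (sclass v q (basis_seminorm v q c))"
    by (simp add: c_def phi_eq_sclass_point_coeffs[OF \<open>I \<noteq> {}\<close>])
  also have "\<dots> = point_of_coeffs q c"
    using phi_inv_sclass[OF nlf basis_seminorm_in_Sc'[OF nlf c]]
    by (simp add: basis_values_basis_seminorm[OF nlf c])
  also have "\<dots> = (I, a)"
    using point_of_coeffs_point_coeffs[OF \<open>1 < real q\<close> p] by (simp add: c_def)
  finally show ?thesis .
qed

lemma phi_phi_inv:
  assumes nlf: "nonarch_local_field v q" and \<gamma>: "\<gamma> \<in> Sc' v q"
  shows "phi v q (phi_inv v q (sclass v q \<gamma>)) = sclass v q \<gamma>"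
  using phi_point_of_coeffs[OF nlf basis_values_in_coeff_space[OF \<gamma>]]
  by (simp add: phi_inv_sclass[OF nlf \<gamma>] basis_seminorm_basis_values[OF \<gamma>])

section \<open>Continuity of phi\<close>

definition rel_coeff :: "nat \<Rightarrow> 'n::finite set \<Rightarrow> real^'n \<Rightarrow> 'n \<Rightarrow> real" where
  "rel_coeff q J u i = real q powr (Min ((\<lambda>j. u $ j) ` J) - u $ i)"

text \<open>The coefficients of the representative of \<open>phi (I, a)\<close> whose largest basis value is 1.\<close>
definition unit_coeffs :: "nat \<Rightarrow> 'n::finite set \<times> (real^'n) \<Rightarrow> 'n \<Rightarrow> real" where
  "unit_coeffs q p = (case p of (I, a) \<Rightarrow> \<lambda>i. if i \<in> I then rel_coeff q I a i else 0)"

lemma unit_coeffs_eq_point_coeffs: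
  "unit_coeffs q (I, a) = point_coeffs q (I, \<chi> i. a $ i - Min ((\<lambda>j. a $ j) ` I))"
  by (simp add: fun_eq_iff unit_coeffs_def point_coeffs_def rel_coeff_def)

lemma unit_coeffs_in_coeff_space: "0 < q \<Longrightarrow> I \<noteq> {} \<Longrightarrow> unit_coeffs q (I, a) \<in> coeff_space"
  by (simp add: unit_coeffs_eq_point_coeffs point_coeffs_in_coeff_space)

lemma phi_eq_sclass_unit_coeffs:
  assumes "nonarch_local_field v q" "I \<noteq> {}"
  shows "phi v q (I, a) = sclass v q (basis_seminorm v q (unit_coeffs q (I, a)))"
  using phi_shift[OF assms, of a "\<chi> i. a $ i - Min ((\<lambda>j. a $ j) ` I)" "Min ((\<lambda>j. a $ j) ` I)"]
  by (simp add: unit_coeffs_eq_point_coeffs phi_eq_sclass_point_coeffs[OF assms(2)])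

lemma rel_coeff_shift:
  assumes "J \<noteq> {}" "\<forall>j\<in>insert i J. y $ j = z $ j + k"
  shows "rel_coeff q J y i = rel_coeff q J z i"
proof -
  have "(\<lambda>j. y $ j) ` J = (\<lambda>j. z $ j + k) ` J" using assms(2) by auto
  then show ?thesis
    using assms Min_add_commute[of J "\<lambda>j. z $ j" k] by (simp add: rel_coeff_def)
qed

lemma unit_coeffs_nrm: "K \<noteq> {} \<Longrightarrow> unit_coeffs q (K, nrm K y) = unit_coeffs q (K, y)"
  by (auto simp: fun_eq_iff unit_coeffs_def nrm_nth
      intro!: rel_coeff_shift[where k = "- (\<Sum>j\<in>K. y $ j) / real (card K)"])

lemma unit_coeffs_nonneg: "0 \<le> unit_coeffs q p i"
  by (auto simp: unit_coeffs_def rel_coeff_def split: prod.split)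

lemma continuous_on_rel_coeff [continuous_intros]:
  "0 < q \<Longrightarrow> J \<noteq> {} \<Longrightarrow> continuous_on S (\<lambda>u. rel_coeff q J u i)"
  unfolding rel_coeff_def by (intro continuous_intros continuous_on_Min_finite) auto

lemma unit_coeffs_near_face:
  assumes q: "1 < real q" and J: "J \<noteq> {}" "J \<subseteq> K" and t: "t \<in> Delta J"
    and u: "\<And>i. i \<notin> J \<Longrightarrow> Min ((\<lambda>j. u $ j) ` J) \<le> u $ i"
  shows "i \<in> J \<Longrightarrow> unit_coeffs q (K, nrm K (u + t)) i = rel_coeff q J u i"
    and "i \<notin> J \<Longrightarrow> unit_coeffs q (K, nrm K (u + t)) i \<le> rel_coeff q J u i"
proof -
  define m where "m = Min ((\<lambda>j. u $ j) ` J)"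
  have t_J: "t $ j = 0" if "j \<in> J" for j using t that by (simp add: Delta_def)
  have t_nonneg: "0 \<le> t $ i" for i using t by (cases "i \<in> J") (auto simp: Delta_def)
  have "m \<in> (\<lambda>j. u $ j) ` J" using J(1) by (simp add: m_def)
  then obtain j where "j \<in> J" "m = u $ j" by blast
  then have "m \<in> (\<lambda>j. (u + t) $ j) ` K" using J(2) t_J by (auto intro!: image_eqI[of _ _ j])
  moreover have "m \<le> (u + t) $ k" for k
  proof (cases "k \<in> J")
    case True
    then show ?thesis
      using Min_le[OF finite_imageI[OF finite] imageI[OF True], of "\<lambda>j. u $ j"] t_J[OF True]
      by (simp add: m_def)
  next
    case False
    then show ?thesis using u[OF False] t_nonneg[of k] by (simp add: m_def)
  qed
  ultimately have "Min ((\<lambda>j. (u + t) $ j) ` K) = m" by (intro Min_eqI) auto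
  moreover have "K \<noteq> {}" using J by auto
  ultimately have uc: "unit_coeffs q (K, nrm K (u + t)) i
      = (if i \<in> K then real q powr (m - u $ i - t $ i) else 0)" for i
    by (simp add: unit_coeffs_nrm) (simp add: unit_coeffs_def rel_coeff_def diff_diff_eq)
  show "unit_coeffs q (K, nrm K (u + t)) i = rel_coeff q J u i" if "i \<in> J"
    using that J(2) by (auto simp: uc t_J rel_coeff_def m_def)
  show "unit_coeffs q (K, nrm K (u + t)) i \<le> rel_coeff q J u i" if "i \<notin> J"
    using q t_nonneg[of i] by (auto simp: uc rel_coeff_def m_def)
qed

text \<open>Raise the coordinates outside \<open>J\<close> far above those in \<open>J\<close>.\<close>
lemma exists_deep_representative:
  fixes J :: "'n::finite set"
  assumes q: "1 < real q" and J: "J \<noteq> {}" and e: "0 < e"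
  obtains u where "u \<in> Aset" "nrm J u = nrm J b" "\<And>i. i \<notin> J \<Longrightarrow> rel_coeff q J u i < e"
proof
  define L where "L = Min ((\<lambda>j. b $ j) ` J) - log q e + 1"
  define z where "z = (\<chi> i. if i \<in> J then b $ i else L)"
  show "nrm UNIV z \<in> Aset" by (rule nrm_in_Aset)
  show "nrm J (nrm UNIV z) = nrm J b" by (simp add: z_def nrm_cong)
  show "rel_coeff q J (nrm UNIV z) i < e" if "i \<notin> J" for i
  proof -
    have "rel_coeff q J (nrm UNIV z) i = rel_coeff q J z i"
      using J by (intro rel_coeff_shift[where k = "- (\<Sum>j\<in>UNIV. z $ j) / real CARD('n)"])
        (auto simp: nrm_nth)
    also have "\<dots> = real q powr (log q e - 1)"
      using that by (simp add: rel_coeff_def z_def L_def)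
    also have "\<dots> < real q powr (log q e)" using q by (intro powr_less_mono) auto
    finally show ?thesis using q e by simp
  qed
qed

lemma unit_coeffs_close:
  assumes q: "1 < real q" and J: "J \<noteq> {}" "J \<subseteq> K" and t: "t \<in> Delta J"
    and near: "\<forall>j\<in>J. \<bar>rel_coeff q J u j - rel_coeff q J u0 j\<bar> < e"
    and far: "\<forall>i. i \<notin> J \<longrightarrow> rel_coeff q J u i < min e 1"
  shows "\<bar>unit_coeffs q (K, nrm K (u + t)) i - unit_coeffs q (J, nrm J u0) i\<bar> < e"
proof -
  have "Min ((\<lambda>j. u $ j) ` J) \<le> u $ i" if "i \<notin> J" for i
  proof -
    have "real q powr (Min ((\<lambda>j. u $ j) ` J) - u $ i) < real q powr 0"
      using far that q by (simp add: rel_coeff_def)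
    then show ?thesis by (simp only: powr_less_cancel_iff[OF q])
  qed
  note face = unit_coeffs_near_face[OF q J t this]
  have "unit_coeffs q (J, nrm J u0) i = (if i \<in> J then rel_coeff q J u0 i else 0)"
    using unit_coeffs_nrm[OF J(1), of q u0] by (simp add: unit_coeffs_def)
  moreover have "0 \<le> unit_coeffs q (K, nrm K (u + t)) i" by (rule unit_coeffs_nonneg)
  ultimately show ?thesis
    using face[of i] near far by (cases "i \<in> J") auto
qed

lemma unit_coeffs_locally_close:
  assumes q: "1 < real q" and p: "p \<in> Abar" and e: "0 < e"
  obtains T where "openin Abar_top T" "p \<in> T" "\<forall>p'\<in>T. \<forall>i. \<bar>unit_coeffs q p' i - unit_coeffs q p i\<bar> < e"
proof -
  obtain J b where p_eq: "p = (J, b)" and J: "J \<noteq> {}" and b: "nrm J b = b"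
    using p by (cases p) (auto simp: Abar_iff)
  obtain u0 where u0: "u0 \<in> Aset" "nrm J u0 = b" "\<And>i. i \<notin> J \<Longrightarrow> rel_coeff q J u0 i < min e 1"
    using exists_deep_representative[OF q J, of "min e 1" b] e b by auto
  define Ob where "Ob = (\<Inter>j\<in>J. {u. \<bar>rel_coeff q J u j - rel_coeff q J u0 j\<bar> < e})
    \<inter> (\<Inter>i\<in>-J. {u. rel_coeff q J u i < min e 1}) \<inter> ball u0 1"
  define U where "U = Aset \<inter> Ob"
  have "open Ob"
    unfolding Ob_def using q J by (intro open_Int open_INT ballI open_Collect_less continuous_intros) auto
  then have "openin (top_of_set Aset) U" "bounded U"
    by (auto simp: U_def Ob_def openin_open_Int intro: bounded_subset[OF bounded_ball])
  then have "openin Abar_top (Gamma J U)" by (rule openin_Abar_top_Gamma[OF J])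
  moreover have "u0 \<in> U" using u0 e by (auto simp: U_def Ob_def)
  then have "p \<in> Gamma J U" using nrm_mem_Gamma[of u0 U J] by (simp add: p_eq u0(2))
  moreover have "\<bar>unit_coeffs q p' i - unit_coeffs q p i\<bar> < e" if "p' \<in> Gamma J U" for p' i
  proof -
    obtain K u t where "J \<subseteq> K" "u \<in> Ob" "t \<in> Delta J" "p' = (K, nrm K (u + t))"
      using \<open>p' \<in> Gamma J U\<close> by (auto simp: mem_Gamma_iff U_def)
    then show ?thesis
      using unit_coeffs_close[OF q J, of K t u u0 e i] by (simp add: Ob_def p_eq u0(2)[symmetric])
  qed
  ultimately show thesis using that by blast
qed

lemma continuous_map_unit_coeffs:
  assumes "1 < real q"
  shows "continuous_map Abar_top (top_of_set coeff_space) (unit_coeffs q :: _ \<Rightarrow> 'n::finite \<Rightarrow> real)"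
proof -
  have "continuous_map Abar_top euclideanreal (\<lambda>p. unit_coeffs q p i)" for i :: 'n
    unfolding Met_TC.continuous_map_to_metric[simplified] topspace_Abar_top dist_real_def
  proof (intro ballI allI impI)
    fix p :: "'n set \<times> (real^'n)" and \<epsilon> :: real
    assume "p \<in> Abar" "0 < \<epsilon>"
    then obtain T where "openin Abar_top T" "p \<in> T"
      "\<forall>p'\<in>T. \<forall>i. \<bar>unit_coeffs q p' i - unit_coeffs q p i\<bar> < \<epsilon>"
      by (rule unit_coeffs_locally_close[OF assms])
    then show "\<exists>T. openin Abar_top T \<and> p \<in> T \<and> (\<forall>p'\<in>T. \<bar>unit_coeffs q p i - unit_coeffs q p' i\<bar> < \<epsilon>)"
      by (metis abs_minus_commute)
  qed
  moreover have "unit_coeffs q p \<in> coeff_space" if "p \<in> Abar" for p :: "'n set \<times> (real^'n)"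
    using that assms by (cases p) (auto simp: Abar_iff unit_coeffs_in_coeff_space)
  ultimately show ?thesis
    by (auto simp: continuous_map_in_subtopology euclidean_product_topology[symmetric]
        continuous_map_componentwise_UNIV topspace_Abar_top)
qed

section \<open>Continuity of the inverse\<close>

lemma point_of_coeffs_in_GammaD:
  assumes q: "1 < real q" and c: "c \<in> coeff_space" and U: "U \<subseteq> Aset"
    and "point_of_coeffs q c \<in> Gamma I U"
  obtains y where "nrm UNIV y \<in> U" "\<forall>i\<in>I. c i = real q powr - y $ i"
    "\<forall>i. i \<notin> I \<longrightarrow> c i \<le> real q powr - y $ i"
proof -
  obtain K u t where K: "I \<subseteq> K" "u \<in> U" "t \<in> Delta I"
    and eq: "point_of_coeffs q c = (K, nrm K (u + t))"
    using assms(4) by (auto simp: mem_Gamma_iff)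
  then have supp: "coeff_support c = K" and eqK: "nrm K (\<chi> i. - log q (c i)) = nrm K (u + t)"
    by (auto simp: point_of_coeffs_def)
  obtain k where "\<forall>i\<in>K. (\<chi> i. - log q (c i)) $ i = (u + t) $ i + k"
    using eqK by (rule nrm_eq_imp_shift)
  then have k: "\<forall>i\<in>K. - log q (c i) = u $ i + t $ i + k" by simp
  define y where "y = u + (\<chi> i. k)"
  have "nrm UNIV y = u"
    using nrm_shift[of UNIV y u k] nrm_UNIV_Aset K(2) U by (auto simp: y_def)
  then have "nrm UNIV y \<in> U" using K(2) by simp
  moreover have cK: "c i = real q powr - (y $ i + t $ i)" if "i \<in> K" for i
  proof -
    have "c i = real q powr (log q (c i))" using q coeff_space_pos[OF c, of i] that supp by simp
    moreover have "log q (c i) = - (y $ i + t $ i)" using k[rule_format, OF that] by (simp add: y_def)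
    ultimately show ?thesis by simp
  qed
  moreover have "t $ i = 0" if "i \<in> I" for i using K(3) that by (simp add: Delta_def)
  moreover have "c i \<le> real q powr - y $ i" if "i \<notin> I" for i
  proof (cases "i \<in> K")
    case True
    then show ?thesis using cK[OF True] K(3) that q by (simp add: Delta_def)
  next
    case False
    then show ?thesis by (simp add: supp[symmetric] coeff_support_def)
  qed
  ultimately show thesis using K(1) by (intro that[of y]) auto
qed

lemma point_of_coeffs_in_GammaI:
  fixes c :: "'n::finite \<Rightarrow> real"
  assumes q: "1 < real q" and c: "c \<in> coeff_space" and y: "nrm UNIV y \<in> U"
    and on_I: "\<forall>i\<in>I. c i = real q powr - y $ i"
    and off_I: "\<forall>i. i \<notin> I \<longrightarrow> c i \<le> real q powr - y $ i"
  shows "point_of_coeffs q c \<in> Gamma I U"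
proof -
  define K where "K = coeff_support c"
  define t where "t = (\<chi> i. if i \<in> K - I then - log q (c i) - y $ i else 0)"
  have "I \<subseteq> K" using on_I q by (auto simp: K_def coeff_support_def)
  have "- log q (c i) - y $ i \<ge> 0" if "i \<in> K - I" for i
  proof -
    have "log q (c i) \<le> log q (real q powr - y $ i)"
      using off_I that q coeff_space_pos[OF c, of i] by (subst log_le_cancel_iff) (auto simp: K_def)
    then show ?thesis using q by simp
  qed
  then have "t \<in> Delta I" by (auto simp: Delta_def t_def)
  have "\<forall>i\<in>K. (\<chi> i. - log q (c i)) $ i = (y + t) $ i"
    using on_I q by (auto simp: t_def)
  then have "nrm K (\<chi> i. - log q (c i)) = nrm K (nrm UNIV y + t)"
    by (auto simp: nrm_nth intro!: nrm_shift[where k = "(\<Sum>j\<in>UNIV. y $ j) / real CARD('n)"])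
  then have "point_of_coeffs q c = (K, nrm K (nrm UNIV y + t))"
    by (simp add: point_of_coeffs_def K_def)
  then show ?thesis
    using \<open>I \<subseteq> K\<close> y \<open>t \<in> Delta I\<close> by (auto simp: mem_Gamma_iff)
qed

definition Gamma_coeffs :: "nat \<Rightarrow> 'n::finite set \<Rightarrow> (real^'n) set \<Rightarrow> ('n \<Rightarrow> real) set" where
  "Gamma_coeffs q I Ob = {c. \<exists>y. nrm UNIV y \<in> Ob \<and> (\<forall>i\<in>I. c i = real q powr - y $ i) \<and>
      (\<forall>i. i \<notin> I \<longrightarrow> c i < real q powr - y $ i)}"

text \<open>Since \<open>Ob\<close> is open, the coordinates of the witness outside \<open>I\<close> can be lowered slightly,
  which makes the inequalities strict.\<close>
lemma point_of_coeffs_in_Gamma_iff: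
  fixes c :: "'n::finite \<Rightarrow> real"
  assumes q: "1 < real q" and c: "c \<in> coeff_space" and Ob: "open Ob"
  shows "point_of_coeffs q c \<in> Gamma I (Aset \<inter> Ob) \<longleftrightarrow> c \<in> Gamma_coeffs q I Ob"
proof
  assume "point_of_coeffs q c \<in> Gamma I (Aset \<inter> Ob)"
  then obtain y where y: "nrm UNIV y \<in> Aset \<inter> Ob" and on_I: "\<forall>i\<in>I. c i = real q powr - y $ i"
    and off_I: "\<forall>i. i \<notin> I \<longrightarrow> c i \<le> real q powr - y $ i"
    by (rule point_of_coeffs_in_GammaD[OF q c Int_lower1])
  define d :: "real^'n" where "d = (\<chi> i. if i \<in> I then 0 else 1)"
  have "continuous_on UNIV (\<lambda>s. nrm UNIV (y - s *\<^sub>R d))" by (intro continuous_intros)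
  moreover have "nrm UNIV (y - 0 *\<^sub>R d) \<in> Ob" using y by simp
  ultimately obtain s where "0 < s" and s: "nrm UNIV (y - s *\<^sub>R d) \<in> Ob"
    by (rule exists_pos_in_open_preimage[OF Ob])
  moreover have "\<forall>i\<in>I. c i = real q powr - (y - s *\<^sub>R d) $ i" using on_I by (simp add: d_def)
  moreover have "c i < real q powr - (y - s *\<^sub>R d) $ i" if "i \<notin> I" for i
    using off_I that q \<open>0 < s\<close> by (auto simp: d_def intro: order.strict_trans1)
  ultimately show "c \<in> Gamma_coeffs q I Ob" unfolding Gamma_coeffs_def by blast
next
  assume "c \<in> Gamma_coeffs q I Ob"
  then obtain y where "nrm UNIV y \<in> Ob" "\<forall>i\<in>I. c i = real q powr - y $ i"
    "\<forall>i. i \<notin> I \<longrightarrow> c i < real q powr - y $ i"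
    unfolding Gamma_coeffs_def by blast
  then show "point_of_coeffs q c \<in> Gamma I (Aset \<inter> Ob)"
    using nrm_in_Aset by (intro point_of_coeffs_in_GammaI[OF q c]) (auto intro: less_imp_le)
qed

text \<open>On \<open>I\<close> a witness is determined by \<open>c\<close>, so \<open>Gamma_coeffs q I Ob\<close> is the union, over the
  coordinates \<open>x\<close> of the witness outside \<open>I\<close>, of the open sets \<open>W x\<close>.\<close>
lemma open_Gamma_coeffs:
  fixes I :: "'n::finite set"
  assumes q: "1 < real q" and Ob: "open Ob"
  shows "open (Gamma_coeffs q I Ob)"
proof -
  define G where "G x c = (\<chi> i. if i \<in> I then - log q (c i) else x $ i)"
    for x :: "real^'n" and c :: "'n \<Rightarrow> real"
  define Pos where "Pos = (\<Inter>i\<in>I. {c :: 'n \<Rightarrow> real. 0 < c i})"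
  define W where "W x = Pos \<inter> (\<lambda>c. nrm UNIV (G x c)) -` Ob
    \<inter> (\<Inter>i\<in>-I. {c. c i < real q powr - x $ i})" for x
  have "open Pos" unfolding Pos_def by (intro open_INT ballI open_Collect_less continuous_intros) auto
  have "continuous_on Pos (\<lambda>c. nrm UNIV (G x c))" for x
    unfolding G_def
  proof (intro continuous_intros continuous_on_vec_lambda)
    fix i
    show "continuous_on Pos (\<lambda>c. if i \<in> I then - log q (c i) else x $ i)"
      using q by (cases "i \<in> I") (auto simp: Pos_def less_le intro!: continuous_intros)
  qed
  then have pre: "open (Pos \<inter> (\<lambda>c. nrm UNIV (G x c)) -` Ob)" for x
    using \<open>open Pos\<close> Ob by (rule continuous_open_preimage)
  have "open (W x)" for x
    unfolding W_def by (rule open_Int[OF pre]) (intro open_INT ballI open_Collect_less continuous_intros, auto)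
  moreover have "Gamma_coeffs q I Ob = (\<Union>x. W x)"
  proof (intro set_eqI iffI)
    fix c assume "c \<in> Gamma_coeffs q I Ob"
    then obtain y where "nrm UNIV y \<in> Ob" "\<forall>i\<in>I. c i = real q powr - y $ i"
      "\<forall>i. i \<notin> I \<longrightarrow> c i < real q powr - y $ i"
      unfolding Gamma_coeffs_def by blast
    moreover have "G y c = y" using calculation(2) q by (simp add: G_def vec_eq_iff)
    ultimately have "c \<in> W y" using q by (auto simp: W_def Pos_def)
    then show "c \<in> (\<Union>x. W x)" by blast
  next
    fix c assume "c \<in> (\<Union>x. W x)"
    then obtain x where "c \<in> W x" by blast
    then have "nrm UNIV (G x c) \<in> Ob" "\<forall>i\<in>I. c i = real q powr - G x c $ i"
      "\<forall>i. i \<notin> I \<longrightarrow> c i < real q powr - G x c $ i"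
      using q by (auto simp: W_def Pos_def G_def)
    then show "c \<in> Gamma_coeffs q I Ob" unfolding Gamma_coeffs_def by blast
  qed
  ultimately show ?thesis by (metis open_UN)
qed

lemma openin_point_of_coeffs_preimage_Gamma:
  assumes q: "1 < real q" and U: "openin (top_of_set Aset) U"
  shows "openin (top_of_set coeff_space) {c \<in> coeff_space. point_of_coeffs q c \<in> Gamma I U}"
proof -
  obtain Ob where Ob: "open Ob" "U = Aset \<inter> Ob" using U by (auto simp: openin_open)
  then have "{c \<in> coeff_space. point_of_coeffs q c \<in> Gamma I U} = coeff_space \<inter> Gamma_coeffs q I Ob"
    using point_of_coeffs_in_Gamma_iff[OF q _ Ob(1)] by auto
  then show ?thesis using open_Gamma_coeffs[OF q Ob(1)] by (simp add: openin_open_Int)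
qed

lemma continuous_map_point_of_coeffs:
  assumes "1 < real q"
  shows "continuous_map (top_of_set coeff_space) Abar_top (point_of_coeffs q :: _ \<Rightarrow> 'n::finite set \<times> _)"
  unfolding Abar_top_def
proof (rule continuous_on_generated_topo)
  fix B :: "('n set \<times> (real^'n)) set"
  assume "B \<in> Abar_base"
  then obtain I U where "openin (top_of_set Aset) U" "B = Gamma I U" by (rule Abar_base_imp_Gamma)
  then show "openin (top_of_set coeff_space) (point_of_coeffs q -` B \<inter> topspace (top_of_set coeff_space))"
    using openin_point_of_coeffs_preimage_Gamma[OF assms] by (simp add: Int_commute Collect_conj_eq vimage_def)
next
  show "point_of_coeffs q ` topspace (top_of_set coeff_space) \<subseteq> \<Union>(Abar_base :: ('n set \<times> (real^'n)) set set)"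
  proof -
    have "\<Union>(Abar_base :: ('n set \<times> (real^'n)) set set) = Abar"
      using topspace_Abar_top unfolding Abar_top_def topology_generated_by_topspace .
    then show ?thesis by (simp add: image_subset_iff point_of_coeffs_in_Abar)
  qed
qed

lemma homeomorphic_map_phi:
  fixes v :: "'k::field \<Rightarrow> int"
  assumes nlf: "nonarch_local_field v q"
  shows "homeomorphic_map (Abar_top :: ('n::finite set \<times> (real^'n)) topology) (Sc_top v q) (phi v q)"
proof -
  have q: "1 < real q" by (rule nonarch_local_field_q_gt_1[OF nlf])
  have quot: "quotient_map (Sc'_top v q) (Sc_top v q) (sclass v q :: (('n \<Rightarrow> 'k) \<Rightarrow> real) \<Rightarrow> _)"
    unfolding Sc_top_def by (rule quotient_map_quotient_topology)
  note coeffs = homeomorphic_maps_basis_seminorm[OF nlf, unfolded homeomorphic_maps_def]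
  have "continuous_map Abar_top (Sc_top v q)
      (sclass v q \<circ> basis_seminorm v q \<circ> (unit_coeffs q :: _ \<Rightarrow> 'n \<Rightarrow> real))"
    by (rule continuous_map_compose[OF continuous_map_unit_coeffs[OF q]
          continuous_map_compose[OF conjunct1[OF coeffs] quotient_imp_continuous_map[OF quot]]])
  then have "continuous_map (Abar_top :: ('n set \<times> (real^'n)) topology) (Sc_top v q) (phi v q)"
  proof (rule continuous_map_eq)
    fix p assume "p \<in> topspace (Abar_top :: ('n set \<times> (real^'n)) topology)"
    then obtain I a where "p = (I, a)" "I \<noteq> {}" by (cases p) (auto simp: topspace_Abar_top Abar_iff)
    then show "(sclass v q \<circ> basis_seminorm v q \<circ> unit_coeffs q) p = phi v q p"
      by (simp add: phi_eq_sclass_unit_coeffs[OF nlf])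
  qed
  moreover have "continuous_map (Sc'_top v q) Abar_top (point_of_coeffs q \<circ> basis_values :: _ \<Rightarrow> 'n set \<times> _)"
    by (intro continuous_map_compose[OF conjunct1[OF conjunct2[OF coeffs]]] continuous_map_point_of_coeffs[OF q])
  then have "continuous_map (Sc'_top v q) Abar_top (phi_inv v q \<circ> sclass v q :: _ \<Rightarrow> 'n set \<times> _)"
    by (rule continuous_map_eq) (simp add: Sc'_top_def phi_inv_sclass[OF nlf])
  then have "continuous_map (Sc_top v q) Abar_top (phi_inv v q :: _ \<Rightarrow> 'n set \<times> _)"
    by (rule continuous_compose_quotient_map[OF quot])
  moreover have "\<forall>p\<in>topspace Abar_top. phi_inv v q (phi v q p) = (p :: 'n set \<times> (real^'n))"
    using phi_inv_phi[OF nlf] by (auto simp: topspace_Abar_top Abar_def)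
  moreover have "topspace (Sc_top v q) = sclass v q ` (Sc' v q :: (('n \<Rightarrow> 'k) \<Rightarrow> real) set)"
    using quotient_imp_surjective_map[OF quot] by (simp add: Sc'_top_def)
  then have "\<forall>X\<in>topspace (Sc_top v q). phi v q (phi_inv v q X :: 'n set \<times> (real^'n)) = X"
    using phi_phi_inv[OF nlf] by auto
  ultimately have "homeomorphic_maps Abar_top (Sc_top v q) (phi v q :: 'n set \<times> (real^'n) \<Rightarrow> _) (phi_inv v q)"
    unfolding homeomorphic_maps_def by blast
  then show ?thesis using homeomorphic_map_maps by blast
qed

section \<open>Equivariance\<close>

lemma basis_seminorm_comp_ninv:
  assumes nlf: "nonarch_local_field v q" and d: "\<forall>i. d i \<noteq> 0" and w: "w permutes UNIV"
  shows "basis_seminorm v q c \<circ> ninv d w = basis_seminorm v q (\<lambda>j. real q powr v (d j) * c (inv w j))"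
proof
  fix x
  define h where "h j = absv v q (x j) * (real q powr v (d j) * c (inv w j))" for j
  have "(basis_seminorm v q c \<circ> ninv d w) x = Max (range (h \<circ> w))"
    unfolding basis_seminorm_def ninv_def h_def o_def
    using d w by (simp add: absv_divide[OF nlf] permutes_inverses(2) mult_ac)
  also have "range (h \<circ> w) = h ` range w" by (rule image_comp[symmetric])
  also have "range w = UNIV" by (rule permutes_image[OF w])
  finally show "(basis_seminorm v q c \<circ> ninv d w) x = basis_seminorm v q (\<lambda>j. real q powr v (d j) * c (inv w j)) x"
    by (simp add: basis_seminorm_def h_def)
qed

lemma N_act_Sc_sclass:
  assumes nlf: "nonarch_local_field v q" and "\<gamma> \<in> Sc' v q" "\<gamma> \<circ> ninv d w \<in> Sc' v q"
  shows "N_act_Sc d w (sclass v q \<gamma>) = sclass v q (\<gamma> \<circ> ninv d w)"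
proof (intro set_eqI iffI)
  fix h assume "h \<in> N_act_Sc d w (sclass v q \<gamma>)"
  then obtain r where "0 < r" "h = (\<lambda>x. r * (\<gamma> \<circ> ninv d w) x)"
    by (auto simp: N_act_Sc_def sclass_def o_def)
  then show "h \<in> sclass v q (\<gamma> \<circ> ninv d w)"
    using scale_in_Sc'[OF nlf assms(3)] unfolding sclass_def by blast
next
  fix h assume "h \<in> sclass v q (\<gamma> \<circ> ninv d w)"
  then obtain r where "0 < r" "h = (\<lambda>x. r * \<gamma> x) \<circ> ninv d w"
    by (auto simp: sclass_def o_def)
  moreover have "(\<lambda>x. r * \<gamma> x) \<in> sclass v q \<gamma>"
    using scale_in_Sc'[OF nlf assms(2) \<open>0 < r\<close>] \<open>0 < r\<close> unfolding sclass_def by blast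
  ultimately show "h \<in> N_act_Sc d w (sclass v q \<gamma>)" by (auto simp: N_act_Sc_def)
qed

lemma phi_N_act_Abar:
  assumes nlf: "nonarch_local_field v q" and "I \<noteq> {}"
  shows "phi v q (N_act_Abar v d w (I, a)) = phi v q (w ` I, \<chi> j. a $ inv w j - v (d j))"
proof -
  define z where "z = (\<chi> j. a $ inv w j)"
  have "w ` I \<noteq> {}" using assms(2) by simp
  have "phi v q (N_act_Abar v d w (I, a)) = phi v q (w ` I, \<chi> j. nrm (w ` I) z $ j - v (d j))"
    by (simp add: N_act_Abar_def T_act_def W_act_def z_def phi_nrm[OF nlf \<open>w ` I \<noteq> {}\<close>])
  also have "\<dots> = phi v q (w ` I, \<chi> j. z $ j - v (d j))"
    by (rule phi_shift[OF nlf \<open>w ` I \<noteq> {}\<close>, where k = "- (\<Sum>j\<in>w ` I. z $ j) / real (card (w ` I))"])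
      (simp add: nrm_nth)
  finally show ?thesis by (simp add: z_def)
qed

lemma point_coeffs_N_act:
  fixes v :: "'k \<Rightarrow> int"
  assumes "w permutes UNIV"
  shows "point_coeffs q (w ` I, \<chi> j. a $ inv w j - v (d j))
    = (\<lambda>j. real q powr v (d j) * point_coeffs q (I, a) (inv w j))"
proof -
  have "j \<in> w ` I \<longleftrightarrow> inv w j \<in> I" for j
    using assms by (metis image_iff permutes_inverses(1,2))
  then show ?thesis by (auto simp: fun_eq_iff point_coeffs_def powr_add[symmetric])
qed

lemma phi_equivariant:
  assumes nlf: "nonarch_local_field v q" and d: "\<forall>i. d i \<noteq> 0" and w: "w permutes UNIV"
    and p: "p \<in> Abar"
  shows "phi v q (N_act_Abar v d w p) = N_act_Sc d w (phi v q p)"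
proof -
  obtain I a where p_eq: "p = (I, a)" and "I \<noteq> {}" using p by (cases p) (auto simp: Abar_iff)
  have "0 < q" using nonarch_local_field_q_gt_1[OF nlf] by simp
  define c where "c = point_coeffs q (I, a)"
  have c: "c \<in> coeff_space" using \<open>0 < q\<close> \<open>I \<noteq> {}\<close> by (simp add: c_def point_coeffs_in_coeff_space)
  define c' where "c' = point_coeffs q (w ` I, \<chi> j. a $ inv w j - v (d j))"
  have c': "c' \<in> coeff_space" using \<open>0 < q\<close> \<open>I \<noteq> {}\<close> by (simp add: c'_def point_coeffs_in_coeff_space)
  have twist: "basis_seminorm v q c \<circ> ninv d w = basis_seminorm v q c'"
    unfolding c_def c'_def point_coeffs_N_act[OF w] by (rule basis_seminorm_comp_ninv[OF nlf d w])
  have "phi v q (N_act_Abar v d w p) = sclass v q (basis_seminorm v q c')"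
    using \<open>I \<noteq> {}\<close> by (simp add: p_eq phi_N_act_Abar[OF nlf] phi_eq_sclass_point_coeffs c'_def)
  also have "\<dots> = N_act_Sc d w (sclass v q (basis_seminorm v q c))"
    using N_act_Sc_sclass[OF nlf basis_seminorm_in_Sc'[OF nlf c]] basis_seminorm_in_Sc'[OF nlf c']
    by (simp add: twist)
  also have "\<dots> = N_act_Sc d w (phi v q p)"
    using \<open>I \<noteq> {}\<close> by (simp add: p_eq phi_eq_sclass_point_coeffs c_def)
  finally show ?thesis .
qed

theorem proposition3p2:
  fixes v :: "'k::field \<Rightarrow> int" and q :: nat
  assumes "nonarch_local_field v q"
  shows "homeomorphic_map (Abar_top :: ('n::finite set \<times> (real^'n)) topology)
            (Sc_top v q) (phi v q)
       \<and> (\<forall>d w (x :: 'n set \<times> (real^'n)). (\<forall>i. d i \<noteq> 0) \<longrightarrow> w permutes UNIV \<longrightarrow> x \<in> Abar \<longrightarrow>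
            phi v q (N_act_Abar v d w x) = N_act_Sc d w (phi v q x))"
  using homeomorphic_map_phi[OF assms] phi_equivariant[OF assms] by blast

end
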